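(* Let $(\star)$ be a linear system over $\mathbb{F}_q$ with coefficient matrix $A\in\mathbb{F}_q^{m\times k}$ which is of type (RC), non-degenerate and irreducible, with $\ell$ column equivalence classes. Let $S\subseteq\mathbb{F}_q^n$ with $|S|\ge q^{1+\frac{\ell-1}{\ell}n}$, and assume that at least one of the following holds: (i) $\ell=m+1$; (ii) every column equivalence class sums to zero. Then there exists a solution $(x_1,\dots,x_k)\in S^k$ of $(\star)$ such that every $b\in\mathrm{Ann}_{\mathrm{bal}}(x_1,\dots,x_k)$ that preserves the column equivalence classes of $(\star)$ lies in the row space of $A$.
   Context: Solutions are tuples in $(\mathbb{F}_q^n)^k$ with $\sum_ja_{ij}x_j=0$ for all $i$. $\mathrm{Ann}_{\mathrm{bal}}(x_1,\dots,x_k)=\{b\in\mathbb{F}_q^k:\sum_jb_jx_j=0,\ \sum_jb_j=0\}$. Indices $j,j'$ are equivalent if columns $j,j'$ of $A$ are nonzero scalar multiples of one another; classes are column equivalence classes; a class sums to zero if its columns add up to the zero vector. A vector $b$ preserves the column equivalence classes if the matrix obtained by appending $b$ as an extra row to $A$ has the same column equivalence classes as $A$. Type (RC): every row of $A$ sums to $0$ and at most one column equivalence class has size $1$. Non-degenerate: rows of $A$ linearly independent and no zero column. Irreducible: not equivalent (same row space) to a system whose variables split into at least two classes with each equation only using (nonzero coefficients on) variables of one class. *)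

theory Defs
  imports Complex_Main "HOL-Library.Disjoint_Sets" "HOL-Library.Cardinality"
begin

text \<open>A linear system with m equations in k variables over a field is given by its
coefficient matrix A :: nat => nat => 'a, where only the entries A i j with i < m
and j < k are relevant. Vectors of F_q^k are functions nat => 'a vanishing outside
{..<k}; points of F_q^n are functions 'n => 'a for a finite index type 'n.\<close>

definition col_equiv :: "(nat \<Rightarrow> nat \<Rightarrow> 'a::field) \<Rightarrow> nat \<Rightarrow> nat \<Rightarrow> nat \<Rightarrow> bool" where
  "col_equiv A m j j' \<longleftrightarrow> (\<exists>c. c \<noteq> 0 \<and> (\<forall>i<m. A i j' = c * A i j))"

definition col_class :: "(nat \<Rightarrow> nat \<Rightarrow> 'a::field) \<Rightarrow> nat \<Rightarrow> nat \<Rightarrow> nat \<Rightarrow> nat set" where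
  "col_class A m k j = {j'. j' < k \<and> col_equiv A m j j'}"

definition col_classes :: "(nat \<Rightarrow> nat \<Rightarrow> 'a::field) \<Rightarrow> nat \<Rightarrow> nat \<Rightarrow> nat set set" where
  "col_classes A m k = {col_class A m k j | j. j < k}"

definition class_sums_zero :: "(nat \<Rightarrow> nat \<Rightarrow> 'a::field) \<Rightarrow> nat \<Rightarrow> nat set \<Rightarrow> bool" where
  "class_sums_zero A m C \<longleftrightarrow> (\<forall>i<m. (\<Sum>j\<in>C. A i j) = 0)"

definition append_row :: "(nat \<Rightarrow> nat \<Rightarrow> 'a) \<Rightarrow> nat \<Rightarrow> (nat \<Rightarrow> 'a) \<Rightarrow> nat \<Rightarrow> nat \<Rightarrow> 'a" where
  "append_row A m b = (\<lambda>i j. if i < m then A i j else b j)"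

definition preserves_classes :: "(nat \<Rightarrow> nat \<Rightarrow> 'a::field) \<Rightarrow> nat \<Rightarrow> nat \<Rightarrow> (nat \<Rightarrow> 'a) \<Rightarrow> bool" where
  "preserves_classes A m k b \<longleftrightarrow>
     col_classes (append_row A m b) (Suc m) k = col_classes A m k"

definition type_RC :: "(nat \<Rightarrow> nat \<Rightarrow> 'a::field) \<Rightarrow> nat \<Rightarrow> nat \<Rightarrow> bool" where
  "type_RC A m k \<longleftrightarrow> (\<forall>i<m. (\<Sum>j<k. A i j) = 0)
      \<and> card {C \<in> col_classes A m k. card C = 1} \<le> 1"

definition non_degenerate :: "(nat \<Rightarrow> nat \<Rightarrow> 'a::field) \<Rightarrow> nat \<Rightarrow> nat \<Rightarrow> bool" where
  "non_degenerate A m k \<longleftrightarrow>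
     (\<forall>c. (\<forall>j<k. (\<Sum>i<m. c i * A i j) = 0) \<longrightarrow> (\<forall>i<m. c i = 0))
     \<and> (\<forall>j<k. \<exists>i<m. A i j \<noteq> 0)"

definition row_space :: "(nat \<Rightarrow> nat \<Rightarrow> 'a::field) \<Rightarrow> nat \<Rightarrow> nat \<Rightarrow> (nat \<Rightarrow> 'a) set" where
  "row_space A m k = {b. (\<forall>j\<ge>k. b j = 0) \<and> (\<exists>c. \<forall>j<k. b j = (\<Sum>i<m. c i * A i j))}"

definition irreducible_sys :: "(nat \<Rightarrow> nat \<Rightarrow> 'a::field) \<Rightarrow> nat \<Rightarrow> nat \<Rightarrow> bool" where
  "irreducible_sys A m k \<longleftrightarrow>
     \<not> (\<exists>(A' :: nat \<Rightarrow> nat \<Rightarrow> 'a) m' P. row_space A' m' k = row_space A m k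
          \<and> partition_on {..<k} P \<and> card P \<ge> 2
          \<and> (\<forall>i<m'. \<exists>B\<in>P. \<forall>j<k. A' i j \<noteq> 0 \<longrightarrow> j \<in> B))"

definition is_solution :: "(nat \<Rightarrow> nat \<Rightarrow> 'a::field) \<Rightarrow> nat \<Rightarrow> nat \<Rightarrow> (nat \<Rightarrow> 'n \<Rightarrow> 'a) \<Rightarrow> bool" where
  "is_solution A m k x \<longleftrightarrow> (\<forall>i<m. (\<lambda>t. \<Sum>j<k. A i j * x j t) = (\<lambda>t. 0))"

definition Ann_bal :: "nat \<Rightarrow> (nat \<Rightarrow> 'n \<Rightarrow> 'a::field) \<Rightarrow> (nat \<Rightarrow> 'a) set" where
  "Ann_bal k x = {b. (\<forall>j\<ge>k. b j = 0) \<and> (\<lambda>t. \<Sum>j<k. b j * x j t) = (\<lambda>t. 0)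
                      \<and> (\<Sum>j<k. b j) = 0}"

end

theory Submission
  imports Defs "HOL-Analysis.Convex"
begin

text \<open>Columns in one equivalence class differ only by nonzero scalars, and a vector \<open>b\<close> preserving
the classes is scaled in the same way; hence \<open>b\<close> lies in the row space of \<open>A\<close> iff its restriction
\<open>\<beta>\<close> to class representatives lies in the row space \<open>R\<close> of the reduced \<open>m \<times> \<ell>\<close> matrix formed by the
representative columns. By non-degeneracy \<open>R\<close> has dimension \<open>m\<close>.

If \<open>\<ell> = m + 1\<close> and some class does not sum to zero, summing the scalars over each class gives a
nonzero vector \<open>\<tau>\<close> orthogonal to \<open>R\<close> (the rows of \<open>A\<close> sum to zero) and to \<open>\<beta>\<close> (\<open>b\<close> is balanced).
So \<open>R\<close> is the hyperplane orthogonal to \<open>\<tau>\<close>, it contains \<open>\<beta>\<close>, and any constant tuple in \<open>S\<close>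
is a solution of the required kind.

If every class sums to zero, let the tuple \<open>x\<close> take the value \<open>s C\<close> at the representative of each
class \<open>C\<close> and \<open>s' C\<close> at its other members, for \<open>s, s' \<in> S\<^sup>\<ell>\<close>. Then \<open>x\<close> is a solution iff the reduced
matrix annihilates \<open>s - s'\<close> coordinatewise, and a class-preserving \<open>b \<in> Ann_bal k x\<close> outside the row
space of \<open>A\<close> yields some \<open>\<beta> \<notin> R\<close> annihilating \<open>s - s'\<close> as well. By Cauchy-Schwarz there are at
least \<open>|S|^(2\<ell>) / q^(m n)\<close> pairs of the first kind, whereas each of the fewer than \<open>q^\<ell>\<close> vectors
\<open>\<beta> \<notin> R\<close> accounts for at most \<open>|S|^\<ell> q^((\<ell> - m - 1) n)\<close> pairs;
the density hypothesis makes the first number larger.\<close>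

section \<open>Homogeneous systems over a finite field\<close>

definition hom_solutions :: "nat \<Rightarrow> (nat \<Rightarrow> 'b \<Rightarrow> 'a::field) \<Rightarrow> 'b set \<Rightarrow> ('b \<Rightarrow> 'a) set" where
  "hom_solutions p \<rho> L = {u \<in> L \<rightarrow>\<^sub>E UNIV. \<forall>i<p. (\<Sum>r\<in>L. \<rho> i r * u r) = 0}"

definition rows_independent :: "nat \<Rightarrow> (nat \<Rightarrow> 'b \<Rightarrow> 'a::field) \<Rightarrow> 'b set \<Rightarrow> bool" where
  "rows_independent p \<rho> L \<longleftrightarrow> (\<forall>c. (\<forall>r\<in>L. (\<Sum>i<p. c i * \<rho> i r) = 0) \<longrightarrow> (\<forall>i<p. c i = 0))"

lemma finite_hom_solutions:
  fixes \<rho> :: "nat \<Rightarrow> 'b \<Rightarrow> 'a::{field,finite}"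
  assumes "finite L"
  shows "finite (hom_solutions p \<rho> L)"
  unfolding hom_solutions_def
  by (rule finite_subset[of _ "L \<rightarrow>\<^sub>E UNIV"]) (auto intro: finite_PiE assms)

lemma hom_solutions_Suc_fun_upd:
  "hom_solutions (Suc r) (\<rho>(r := \<beta>)) L = {u \<in> hom_solutions r \<rho> L. (\<Sum>x\<in>L. \<beta> x * u x) = 0}"
  by (auto simp: hom_solutions_def less_Suc_eq)

lemma rows_independent_last_row_nonzero:
  fixes \<rho> :: "nat \<Rightarrow> 'b \<Rightarrow> 'a::field"
  assumes "rows_independent (Suc p) \<rho> L"
  obtains r where "r \<in> L" "\<rho> p r \<noteq> 0"
proof -
  define c :: "nat \<Rightarrow> 'a" where "c i = (if i = p then 1 else 0)" for i
  have "\<exists>i<Suc p. c i \<noteq> 0"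
    by (auto simp: c_def)
  with assms obtain r where "r \<in> L" "(\<Sum>i<Suc p. c i * \<rho> i r) \<noteq> 0"
    unfolding rows_independent_def by blast
  moreover have "(\<Sum>i<Suc p. c i * \<rho> i r) = \<rho> p r"
    by (simp add: c_def)
  ultimately show ?thesis
    using that by simp
qed

lemma rows_independent_Suc:
  fixes \<rho> :: "nat \<Rightarrow> 'b \<Rightarrow> 'a::field"
  assumes "rows_independent p \<rho> L"
    and "\<And>c. \<exists>r\<in>L. \<rho> p r \<noteq> (\<Sum>i<p. c i * \<rho> i r)"
  shows "rows_independent (Suc p) \<rho> L"
  unfolding rows_independent_def
proof (rule allI, rule impI)
  fix c :: "nat \<Rightarrow> 'a"
  assume c: "\<forall>r\<in>L. (\<Sum>i<Suc p. c i * \<rho> i r) = 0"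
  have "c p = 0"
  proof (rule ccontr)
    assume "c p \<noteq> 0"
    have "\<rho> p r = (\<Sum>i<p. (- c i / c p) * \<rho> i r)" if "r \<in> L" for r
    proof -
      have "c p * \<rho> p r + (\<Sum>i<p. c i * \<rho> i r) = 0"
        using c that by (simp add: add.commute)
      then have "c p * \<rho> p r = - (\<Sum>i<p. c i * \<rho> i r)"
        by (simp add: eq_neg_iff_add_eq_0)
      have "\<rho> p r = c p * \<rho> p r / c p"
        using \<open>c p \<noteq> 0\<close> by simp
      also have "\<dots> = - (\<Sum>i<p. c i * \<rho> i r) / c p"
        by (simp only: \<open>c p * \<rho> p r = - (\<Sum>i<p. c i * \<rho> i r)\<close>)
      finally show ?thesis
        by (simp add: sum_divide_distrib sum_negf)
    qed
    then show False
      using assms(2)[of "\<lambda>i. - c i / c p"] by auto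
  qed
  with c have "\<forall>r\<in>L. (\<Sum>i<p. c i * \<rho> i r) = 0"
    by simp
  then have "\<forall>i<p. c i = 0"
    using assms(1) unfolding rows_independent_def by blast
  with \<open>c p = 0\<close> show "\<forall>i<Suc p. c i = 0"
    using less_Suc_eq by auto
qed

lemma rows_independent_eliminate:
  fixes \<rho> :: "nat \<Rightarrow> 'b \<Rightarrow> 'a::field"
  assumes indep: "rows_independent (Suc p) \<rho> L" and r0: "r0 \<in> L" "\<rho> p r0 \<noteq> 0"
  shows "rows_independent p (\<lambda>i r. \<rho> i r - \<rho> i r0 * \<rho> p r / \<rho> p r0) (L - {r0})"
  unfolding rows_independent_def
proof (rule allI, rule impI)
  fix c :: "nat \<Rightarrow> 'a"
  assume c: "\<forall>r\<in>L - {r0}. (\<Sum>i<p. c i * (\<rho> i r - \<rho> i r0 * \<rho> p r / \<rho> p r0)) = 0"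
  define c' where "c' = c(p := - (\<Sum>i<p. c i * \<rho> i r0) / \<rho> p r0)"
  have expand: "(\<Sum>i<Suc p. c' i * \<rho> i r)
      = (\<Sum>i<p. c i * (\<rho> i r - \<rho> i r0 * \<rho> p r / \<rho> p r0))" for r
  proof -
    have "(\<Sum>i<p. c i * (\<rho> i r - \<rho> i r0 * \<rho> p r / \<rho> p r0))
        = (\<Sum>i<p. c i * \<rho> i r) - (\<Sum>i<p. c i * \<rho> i r0) * (\<rho> p r / \<rho> p r0)"
      by (simp add: right_diff_distrib sum_subtractf sum_distrib_right sum_divide_distrib mult.assoc)
    then show ?thesis
      by (simp add: c'_def)
  qed
  have "\<forall>r\<in>L. (\<Sum>i<Suc p. c' i * \<rho> i r) = 0"
  proof
    fix r
    assume "r \<in> L"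
    show "(\<Sum>i<Suc p. c' i * \<rho> i r) = 0"
    proof (cases "r = r0")
      case True
      then show ?thesis
        using r0(2) by (simp only: expand) simp
    next
      case False
      then show ?thesis
        using c \<open>r \<in> L\<close> by (simp only: expand) simp
    qed
  qed
  then have "\<forall>i<Suc p. c' i = 0"
    using indep unfolding rows_independent_def by blast
  show "\<forall>i<p. c i = 0"
  proof (intro allI impI)
    fix i
    assume "i < p"
    with \<open>\<forall>i<Suc p. c' i = 0\<close> have "c' i = 0"
      by simp
    with \<open>i < p\<close> show "c i = 0"
      by (simp add: c'_def)
  qed
qed

lemma hom_solutions_pivot:
  assumes "finite L" "r0 \<in> L" "u \<in> hom_solutions (Suc p) \<rho> L"
  shows "\<rho> p r0 * u r0 = - (\<Sum>r\<in>L - {r0}. \<rho> p r * u r)"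
  using assms by (simp add: hom_solutions_def sum.remove eq_neg_iff_add_eq_0)

lemma inj_on_restrict_hom_solutions:
  fixes \<rho> :: "nat \<Rightarrow> 'b \<Rightarrow> 'a::field"
  assumes L: "finite L" and r0: "r0 \<in> L" "\<rho> p r0 \<noteq> 0"
  shows "inj_on (\<lambda>u. restrict u (L - {r0})) (hom_solutions (Suc p) \<rho> L)"
proof (rule inj_onI)
  fix u v
  assume u: "u \<in> hom_solutions (Suc p) \<rho> L" and v: "v \<in> hom_solutions (Suc p) \<rho> L"
    and eq: "restrict u (L - {r0}) = restrict v (L - {r0})"
  then have "\<forall>r\<in>L - {r0}. u r = v r"
    by (metis restrict_apply')
  moreover from this have "\<rho> p r0 * u r0 = \<rho> p r0 * v r0"
    using hom_solutions_pivot[OF L r0(1) u] hom_solutions_pivot[OF L r0(1) v] by simp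
  then have "u r0 = v r0"
    using r0(2) by simp
  ultimately show "u = v"
    using u v by (intro PiE_ext[of _ L "\<lambda>_. UNIV"]) (auto simp: hom_solutions_def)
qed

lemma restrict_hom_solutions_eliminate:
  fixes \<rho> :: "nat \<Rightarrow> 'b \<Rightarrow> 'a::field"
  assumes L: "finite L" and r0: "r0 \<in> L" "\<rho> p r0 \<noteq> 0" and u: "u \<in> hom_solutions (Suc p) \<rho> L"
  shows "restrict u (L - {r0}) \<in> hom_solutions p (\<lambda>i r. \<rho> i r - \<rho> i r0 * \<rho> p r / \<rho> p r0) (L - {r0})"
proof -
  have "(\<Sum>r\<in>L - {r0}. (\<rho> i r - \<rho> i r0 * \<rho> p r / \<rho> p r0) * u r) = 0" if "i < p" for i
  proof -
    have "(\<Sum>r\<in>L - {r0}. (\<rho> i r - \<rho> i r0 * \<rho> p r / \<rho> p r0) * u r)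
        = (\<Sum>r\<in>L - {r0}. \<rho> i r * u r) - \<rho> i r0 / \<rho> p r0 * (\<Sum>r\<in>L - {r0}. \<rho> p r * u r)"
      by (simp add: left_diff_distrib sum_subtractf sum_distrib_left mult.assoc)
    also have "\<dots> = (\<Sum>r\<in>L - {r0}. \<rho> i r * u r) + \<rho> i r0 / \<rho> p r0 * (\<rho> p r0 * u r0)"
      by (simp add: hom_solutions_pivot[OF L r0(1) u])
    also have "\<dots> = (\<Sum>r\<in>L. \<rho> i r * u r)"
      using L r0 by (simp add: sum.remove)
    also have "\<dots> = 0"
      using u that by (simp add: hom_solutions_def)
    finally show ?thesis .
  qed
  then show ?thesis
    by (simp add: hom_solutions_def)
qed

lemma card_hom_solutions_eliminate:
  fixes \<rho> :: "nat \<Rightarrow> 'b \<Rightarrow> 'a::{field,finite}"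
  assumes L: "finite L" and r0: "r0 \<in> L" "\<rho> p r0 \<noteq> 0"
  shows "card (hom_solutions (Suc p) \<rho> L)
    \<le> card (hom_solutions p (\<lambda>i r. \<rho> i r - \<rho> i r0 * \<rho> p r / \<rho> p r0) (L - {r0}))"
proof (rule card_inj_on_le)
  show "inj_on (\<lambda>u. restrict u (L - {r0})) (hom_solutions (Suc p) \<rho> L)"
    using L r0 by (rule inj_on_restrict_hom_solutions)
  show "(\<lambda>u. restrict u (L - {r0})) ` hom_solutions (Suc p) \<rho> L
      \<subseteq> hom_solutions p (\<lambda>i r. \<rho> i r - \<rho> i r0 * \<rho> p r / \<rho> p r0) (L - {r0})"
    using restrict_hom_solutions_eliminate[of L r0 \<rho> p] L r0 by blast
  show "finite (hom_solutions p (\<lambda>i r. \<rho> i r - \<rho> i r0 * \<rho> p r / \<rho> p r0) (L - {r0}))"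
    using L by (simp add: finite_hom_solutions)
qed

lemma card_hom_solutions:
  fixes \<rho> :: "nat \<Rightarrow> 'b \<Rightarrow> 'a::{field,finite}"
  assumes "finite L" "rows_independent p \<rho> L"
  shows "card (hom_solutions p \<rho> L) * CARD('a) ^ p \<le> CARD('a) ^ card L"
  using assms
proof (induction p arbitrary: \<rho> L)
  case 0
  then show ?case
    by (simp add: hom_solutions_def card_PiE)
next
  case (Suc p)
  obtain r0 where r0: "r0 \<in> L" "\<rho> p r0 \<noteq> 0"
    using rows_independent_last_row_nonzero[OF Suc.prems(2)] .
  define \<rho>' where "\<rho>' i r = \<rho> i r - \<rho> i r0 * \<rho> p r / \<rho> p r0" for i r
  have "card (hom_solutions (Suc p) \<rho> L) \<le> card (hom_solutions p \<rho>' (L - {r0}))"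
    unfolding \<rho>'_def using Suc.prems(1) r0 by (rule card_hom_solutions_eliminate)
  then have "card (hom_solutions (Suc p) \<rho> L) * CARD('a) ^ Suc p
      \<le> card (hom_solutions p \<rho>' (L - {r0})) * CARD('a) ^ p * CARD('a)"
    by (simp add: mult.assoc)
  also have "\<dots> \<le> CARD('a) ^ card (L - {r0}) * CARD('a)"
  proof (rule mult_le_mono1, rule Suc.IH)
    show "rows_independent p \<rho>' (L - {r0})"
      unfolding \<rho>'_def using Suc.prems(2) r0 by (rule rows_independent_eliminate)
  qed (use Suc.prems(1) in simp)
  also have "\<dots> = CARD('a) ^ card L"
    using card_Suc_Diff1[OF Suc.prems(1) r0(1)] by (metis power_Suc2)
  finally show ?case .
qed

section \<open>Counting pairs of tuples\<close>

lemma card_square_le_card_collisions: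
  assumes T: "finite T" and Y: "finite Y" and F: "F ` T \<subseteq> Y"
  shows "card T ^ 2 \<le> card Y * card {p \<in> T \<times> T. F (fst p) = F (snd p)}"
proof -
  define fibre where "fibre y = {s \<in> T. F s = y}" for y
  have "card T = (\<Sum>y\<in>Y. card (fibre y))"
    unfolding fibre_def using sum.group[OF T Y F, of "\<lambda>_. 1::nat"] by simp
  moreover have "card {p \<in> T \<times> T. F (fst p) = F (snd p)} = (\<Sum>y\<in>Y. card (fibre y) ^ 2)"
  proof -
    have "{p \<in> T \<times> T. F (fst p) = F (snd p)} = (\<Union>y\<in>Y. fibre y \<times> fibre y)"
      using F by (auto simp: fibre_def)
    also have "card \<dots> = (\<Sum>y\<in>Y. card (fibre y \<times> fibre y))"
      using Y T by (intro card_UN_disjoint) (auto simp: fibre_def)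
    finally show ?thesis
      by (simp add: card_cartesian_product power2_eq_square)
  qed
  moreover have "real ((\<Sum>y\<in>Y. card (fibre y)) ^ 2) \<le> real (card Y * (\<Sum>y\<in>Y. card (fibre y) ^ 2))"
    using sum_squared_le_sum_of_squares[of "\<lambda>y. real (card (fibre y))" Y] by (simp add: mult.commute)
  ultimately show ?thesis
    by (simp only: of_nat_le_iff)
qed

lemma card_pairs_with_differences_in:
  fixes S :: "('n::finite \<Rightarrow> 'a::ab_group_add) set"
  assumes L: "finite L" and S: "finite S" and K: "finite K"
  shows "card {p \<in> (L \<rightarrow>\<^sub>E S) \<times> (L \<rightarrow>\<^sub>E S). \<forall>t. (\<lambda>C\<in>L. fst p C t - snd p C t) \<in> K}
    \<le> card (L \<rightarrow>\<^sub>E S) * card K ^ CARD('n)"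
proof -
  define P where "P = {p \<in> (L \<rightarrow>\<^sub>E S) \<times> (L \<rightarrow>\<^sub>E S). \<forall>t. (\<lambda>C\<in>L. fst p C t - snd p C t) \<in> K}"
  define diff where "diff p = (\<lambda>t. (\<lambda>C\<in>L. fst p C t - snd p C t))" for p :: "('b \<Rightarrow> 'n \<Rightarrow> 'a) \<times> ('b \<Rightarrow> 'n \<Rightarrow> 'a)"
  have "inj_on (\<lambda>p. (snd p, diff p)) P"
  proof (rule inj_onI)
    fix p p'
    assume p: "p \<in> P" and p': "p' \<in> P" and eq: "(snd p, diff p) = (snd p', diff p')"
    have "fst p C = fst p' C" if "C \<in> L" for C
    proof
      fix t
      have "diff p t C = diff p' t C"
        using eq by simp
      then show "fst p C t = fst p' C t"
        using eq that by (simp add: diff_def)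
    qed
    moreover have "fst p \<in> L \<rightarrow>\<^sub>E S" "fst p' \<in> L \<rightarrow>\<^sub>E S"
      using p p' by (auto simp: P_def)
    ultimately have "fst p = fst p'"
      using PiE_ext by metis
    then show "p = p'"
      using eq by (simp add: prod_eq_iff)
  qed
  moreover have "(\<lambda>p. (snd p, diff p)) ` P \<subseteq> (L \<rightarrow>\<^sub>E S) \<times> ((UNIV :: 'n set) \<rightarrow>\<^sub>E K)"
    by (auto simp: P_def diff_def)
  moreover have "finite ((L \<rightarrow>\<^sub>E S) \<times> ((UNIV :: 'n set) \<rightarrow>\<^sub>E K))"
    using L S K by (intro finite_cartesian_product finite_PiE) auto
  ultimately have "card P \<le> card ((L \<rightarrow>\<^sub>E S) \<times> ((UNIV :: 'n set) \<rightarrow>\<^sub>E K))"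
    by (rule card_inj_on_le)
  then show ?thesis
    by (simp add: P_def card_cartesian_product card_PiE)
qed

definition solution_pairs ::
    "'b set \<Rightarrow> ('n \<Rightarrow> 'a) set \<Rightarrow> (nat \<Rightarrow> 'b \<Rightarrow> 'a::field) \<Rightarrow> nat \<Rightarrow> (('b \<Rightarrow> 'n \<Rightarrow> 'a) \<times> ('b \<Rightarrow> 'n \<Rightarrow> 'a)) set" where
  "solution_pairs L S \<rho> r = {p \<in> (L \<rightarrow>\<^sub>E S) \<times> (L \<rightarrow>\<^sub>E S).
     \<forall>t. (\<lambda>C\<in>L. fst p C t - snd p C t) \<in> hom_solutions r \<rho> L}"

lemma card_solution_pairs_upper:
  fixes \<rho> :: "nat \<Rightarrow> 'b \<Rightarrow> 'a::{field,finite}" and S :: "('n::finite \<Rightarrow> 'a) set"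
  assumes L: "finite L" and indep: "rows_independent r \<rho> L"
  shows "card (solution_pairs L S \<rho> r) * CARD('a) ^ (r * CARD('n))
    \<le> card (L \<rightarrow>\<^sub>E S) * CARD('a) ^ (card L * CARD('n))"
proof -
  let ?K = "hom_solutions r \<rho> L"
  have "card (solution_pairs L S \<rho> r) \<le> card (L \<rightarrow>\<^sub>E S) * card ?K ^ CARD('n)"
    unfolding solution_pairs_def using L finite_hom_solutions[OF L]
    by (intro card_pairs_with_differences_in) auto
  then have "card (solution_pairs L S \<rho> r) * CARD('a) ^ (r * CARD('n))
      \<le> card (L \<rightarrow>\<^sub>E S) * card ?K ^ CARD('n) * CARD('a) ^ (r * CARD('n))"
    by (rule mult_le_mono1)
  also have "\<dots> = card (L \<rightarrow>\<^sub>E S) * (card ?K * CARD('a) ^ r) ^ CARD('n)"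
    by (simp add: power_mult power_mult_distrib)
  also have "\<dots> \<le> card (L \<rightarrow>\<^sub>E S) * (CARD('a) ^ card L) ^ CARD('n)"
    using card_hom_solutions[OF L indep] by (intro mult_le_mono2 power_mono) simp_all
  finally show ?thesis
    by (simp add: power_mult)
qed

lemma card_solution_pairs_lower:
  fixes \<rho> :: "nat \<Rightarrow> 'b \<Rightarrow> 'a::{field,finite}" and S :: "('n::finite \<Rightarrow> 'a) set"
  assumes L: "finite L"
  shows "card (L \<rightarrow>\<^sub>E S) ^ 2 \<le> CARD('a) ^ (r * CARD('n)) * card (solution_pairs L S \<rho> r)"
proof -
  define F where "F s = (\<lambda>i\<in>{..<r}. \<lambda>t. \<Sum>C\<in>L. \<rho> i C * s C t)" for s :: "'b \<Rightarrow> 'n \<Rightarrow> 'a"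
  have "{p \<in> (L \<rightarrow>\<^sub>E S) \<times> (L \<rightarrow>\<^sub>E S). F (fst p) = F (snd p)} \<subseteq> solution_pairs L S \<rho> r"
  proof safe
    fix s s'
    assume s: "s \<in> L \<rightarrow>\<^sub>E S" and s': "s' \<in> L \<rightarrow>\<^sub>E S" and eq: "F (fst (s, s')) = F (snd (s, s'))"
    have "(\<Sum>C\<in>L. \<rho> i C * (\<lambda>C\<in>L. s C t - s' C t) C) = 0" if "i < r" for i t
    proof -
      have "(\<Sum>C\<in>L. \<rho> i C * s C t) = (\<Sum>C\<in>L. \<rho> i C * s' C t)"
        using fun_cong[OF fun_cong[OF eq, of i], of t] that by (simp add: F_def)
      then show ?thesis
        by (simp add: right_diff_distrib sum_subtractf)
    qed
    with s s' show "(s, s') \<in> solution_pairs L S \<rho> r"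
      by (simp add: solution_pairs_def hom_solutions_def)
  qed
  moreover have "finite (solution_pairs L S \<rho> r)"
    unfolding solution_pairs_def using L by (intro finite_subset[OF _ finite_cartesian_product]) (auto intro: finite_PiE)
  ultimately have collisions: "card {p \<in> (L \<rightarrow>\<^sub>E S) \<times> (L \<rightarrow>\<^sub>E S). F (fst p) = F (snd p)}
      \<le> card (solution_pairs L S \<rho> r)"
    by (rule card_mono[rotated])
  have "card (L \<rightarrow>\<^sub>E S) ^ 2
      \<le> card ({..<r} \<rightarrow>\<^sub>E (UNIV :: ('n \<Rightarrow> 'a) set)) * card {p \<in> (L \<rightarrow>\<^sub>E S) \<times> (L \<rightarrow>\<^sub>E S). F (fst p) = F (snd p)}"
    using L by (intro card_square_le_card_collisions) (auto simp: F_def intro: finite_PiE)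
  also have "card ({..<r} \<rightarrow>\<^sub>E (UNIV :: ('n \<Rightarrow> 'a) set)) = CARD('a) ^ (r * CARD('n))"
    by (simp add: card_PiE card_fun mult.commute flip: power_mult)
  also have "CARD('a) ^ (r * CARD('n)) * card {p \<in> (L \<rightarrow>\<^sub>E S) \<times> (L \<rightarrow>\<^sub>E S). F (fst p) = F (snd p)}
      \<le> CARD('a) ^ (r * CARD('n)) * card (solution_pairs L S \<rho> r)"
    using collisions by (rule mult_le_mono2)
  finally show ?thesis .
qed

lemma collision_count_gap:
  fixes q t g n m l :: nat
  assumes q: "q \<ge> 1" and big: "q ^ (l + l * n) \<le> t * q ^ n" and low: "t ^ 2 \<le> q ^ (m * n) * g"
  shows "(q ^ l - 1) * (t * q ^ (l * n)) < g * q ^ (Suc m * n)"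
proof -
  have "t > 0"
    using big q by (cases t) auto
  with q have "(q ^ l - 1) * (t * q ^ (l * n)) < q ^ l * (t * q ^ (l * n))"
    by simp
  also have "\<dots> = t * q ^ (l + l * n)"
    by (simp add: power_add)
  also have "\<dots> \<le> t * (t * q ^ n)"
    using big by simp
  also have "\<dots> = t ^ 2 * q ^ n"
    by (simp add: power2_eq_square)
  also have "\<dots> \<le> q ^ (m * n) * g * q ^ n"
    using low by simp
  also have "\<dots> = g * q ^ (Suc m * n)"
    by (simp add: power_add)
  finally show ?thesis .
qed

lemma col_equiv_refl: "col_equiv A m j j"
  unfolding col_equiv_def by (rule exI[of _ 1]) simp

lemma col_equiv_sym:
  assumes "col_equiv A m j j'"
  shows "col_equiv A m j' j"
proof -
  from assms obtain c where "c \<noteq> 0" "\<forall>i<m. A i j' = c * A i j"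
    unfolding col_equiv_def by blast
  then show ?thesis
    unfolding col_equiv_def by (intro exI[of _ "inverse c"]) simp
qed

lemma col_equiv_trans:
  assumes "col_equiv A m j j'" "col_equiv A m j' j''"
  shows "col_equiv A m j j''"
proof -
  from assms obtain c d where "c \<noteq> 0" "\<forall>i<m. A i j' = c * A i j" "d \<noteq> 0" "\<forall>i<m. A i j'' = d * A i j'"
    unfolding col_equiv_def by blast
  then show ?thesis
    unfolding col_equiv_def by (intro exI[of _ "d * c"]) simp
qed

lemma mem_col_class: "j < k \<Longrightarrow> j \<in> col_class A m k j"
  by (simp add: col_class_def col_equiv_refl)

lemma col_class_in_col_classes: "j < k \<Longrightarrow> col_class A m k j \<in> col_classes A m k"
  unfolding col_classes_def by blast

lemma col_class_eq:
  assumes "j \<in> col_class A m k j0"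
  shows "col_class A m k j = col_class A m k j0"
proof -
  from assms have "col_equiv A m j0 j"
    by (simp add: col_class_def)
  then show ?thesis
    unfolding col_class_def using col_equiv_sym col_equiv_trans by blast
qed

lemma col_classes_eq_col_class:
  assumes "C \<in> col_classes A m k" "j \<in> C"
  shows "C = col_class A m k j"
  using assms col_class_eq unfolding col_classes_def by blast

lemma partition_on_col_classes: "partition_on {..<k} (col_classes A m k)"
proof (rule partition_onI)
  show "\<Union>(col_classes A m k) = {..<k}"
  proof
    show "\<Union>(col_classes A m k) \<subseteq> {..<k}"
      by (auto simp: col_classes_def col_class_def)
    show "{..<k} \<subseteq> \<Union>(col_classes A m k)"
      using mem_col_class col_class_in_col_classes by blast
  qed
  show "disjnt C D" if "C \<in> col_classes A m k" "D \<in> col_classes A m k" "C \<noteq> D" for C D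
    using that col_classes_eq_col_class by (metis disjnt_iff)
  show "{} \<notin> col_classes A m k"
    using mem_col_class by (fastforce simp: col_classes_def)
qed

lemma finite_col_classes: "finite (col_classes A m k)"
  using finite_elements[OF _ partition_on_col_classes] by blast

lemma finite_col_class:
  assumes "C \<in> col_classes A m k"
  shows "finite C"
proof (rule finite_subset)
  show "C \<subseteq> {..<k}"
    using assms partition_onD1[OF partition_on_col_classes] by blast
qed simp

lemma sum_over_col_classes: "(\<Sum>j<k. f j) = (\<Sum>C\<in>col_classes A m k. \<Sum>j\<in>C. f j)"
  using sum.partition[OF _ partition_on_col_classes] by blast

definition class_rep :: "nat set \<Rightarrow> nat" where
  "class_rep C = (SOME j. j \<in> C)"

lemma class_rep_in:
  assumes "C \<in> col_classes A m k"
  shows "class_rep C \<in> C"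
proof -
  have "C \<noteq> {}"
    using assms partition_on_col_classes by (metis partition_onD3)
  then show ?thesis
    unfolding class_rep_def by (simp add: some_in_eq)
qed

lemma class_rep_less:
  assumes "C \<in> col_classes A m k"
  shows "class_rep C < k"
proof -
  have "class_rep C \<in> \<Union>(col_classes A m k)"
    using assms class_rep_in by blast
  then show ?thesis
    using partition_onD1[OF partition_on_col_classes] by blast
qed

lemma col_equiv_class_rep:
  assumes "C \<in> col_classes A m k" "j \<in> C"
  shows "col_equiv A m (class_rep C) j"
proof -
  have "j \<in> col_class A m k (class_rep C)"
    using assms col_classes_eq_col_class[OF assms(1) class_rep_in[OF assms(1)]] by simp
  then show ?thesis
    by (simp add: col_class_def)
qed

section \<open>Class-preserving vectors and the reduced row space\<close>

lemma preserves_classes_col_equiv: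
  assumes pres: "preserves_classes A m k b" and j: "j < k" and jj': "j' \<in> col_class A m k j"
  shows "col_equiv (append_row A m b) (Suc m) j j'"
proof -
  have "col_class (append_row A m b) (Suc m) k j \<in> col_classes (append_row A m b) (Suc m) k"
    using j by (rule col_class_in_col_classes)
  then have "col_class (append_row A m b) (Suc m) k j \<in> col_classes A m k"
    using pres by (simp add: preserves_classes_def)
  moreover have "j \<in> col_class (append_row A m b) (Suc m) k j"
    using mem_col_class[OF j] .
  ultimately have "col_class (append_row A m b) (Suc m) k j = col_class A m k j"
    using col_classes_eq_col_class by blast
  with jj' have "j' \<in> col_class (append_row A m b) (Suc m) k j"
    by simp
  then show ?thesis
    by (simp add: col_class_def)
qed

lemma preserves_classes_scaling:
  fixes A :: "nat \<Rightarrow> nat \<Rightarrow> 'a::field"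
  assumes "preserves_classes A m k b"
  obtains g where "\<And>C j. C \<in> col_classes A m k \<Longrightarrow> j \<in> C \<Longrightarrow>
      (\<forall>i<m. A i j = g j * A i (class_rep C)) \<and> b j = g j * b (class_rep C)"
proof -
  have ex: "\<exists>c. (\<forall>i<m. A i j = c * A i (class_rep C)) \<and> b j = c * b (class_rep C)"
    if "C \<in> col_classes A m k" "j \<in> C" for C j
  proof -
    have "class_rep C < k" "j \<in> col_class A m k (class_rep C)"
      using that class_rep_less col_classes_eq_col_class class_rep_in by blast+
    with assms obtain c where c: "\<forall>i<Suc m. append_row A m b i j = c * append_row A m b i (class_rep C)"
      using preserves_classes_col_equiv unfolding col_equiv_def by blast
    have "\<forall>i<m. A i j = c * A i (class_rep C)"
    proof (intro allI impI)
      fix i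
      assume "i < m"
      then show "A i j = c * A i (class_rep C)"
        using c[rule_format, of i] by (simp add: append_row_def)
    qed
    moreover have "b j = c * b (class_rep C)"
      using c[rule_format, of m] by (simp add: append_row_def)
    ultimately show ?thesis
      by blast
  qed
  define g where "g j = (SOME c. (\<forall>i<m. A i j = c * A i (class_rep (col_class A m k j)))
      \<and> b j = c * b (class_rep (col_class A m k j)))" for j
  show ?thesis
  proof (rule that)
    fix C j
    assume C: "C \<in> col_classes A m k" "j \<in> C"
    then have "col_class A m k j = C"
      using col_classes_eq_col_class by blast
    show "(\<forall>i<m. A i j = g j * A i (class_rep C)) \<and> b j = g j * b (class_rep C)"
      using ex[OF C] unfolding g_def \<open>col_class A m k j = C\<close> by (rule someI_ex)
  qed
qed

lemma sum_over_col_classes_scaled: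
  fixes w g :: "nat \<Rightarrow> 'a::semiring_0"
  assumes "\<And>C j. C \<in> col_classes A m k \<Longrightarrow> j \<in> C \<Longrightarrow> w j = g j * w (class_rep C)"
  shows "(\<Sum>j<k. w j) = (\<Sum>C\<in>col_classes A m k. (\<Sum>j\<in>C. g j) * w (class_rep C))"
proof -
  have "(\<Sum>j\<in>C. w j) = (\<Sum>j\<in>C. g j) * w (class_rep C)" if "C \<in> col_classes A m k" for C
  proof -
    have "(\<Sum>j\<in>C. w j) = (\<Sum>j\<in>C. g j * w (class_rep C))"
      using assms that by (intro sum.cong refl) blast
    then show ?thesis
      by (simp only: sum_distrib_right)
  qed
  then show ?thesis
    unfolding sum_over_col_classes[of w k A m] by (intro sum.cong refl)
qed

lemma class_sum_zero_if_preserves: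
  assumes nd: "non_degenerate A m k" and pres: "preserves_classes A m k b"
    and C: "C \<in> col_classes A m k" and zero: "class_sums_zero A m C"
  shows "(\<Sum>j\<in>C. b j) = 0"
proof -
  obtain g where g: "\<And>j. j \<in> C \<Longrightarrow>
      (\<forall>i<m. A i j = g j * A i (class_rep C)) \<and> b j = g j * b (class_rep C)"
    using preserves_classes_scaling[OF pres, of thesis] C by blast
  obtain i0 where i0: "i0 < m" "A i0 (class_rep C) \<noteq> 0"
    using nd class_rep_less[OF C] unfolding non_degenerate_def by blast
  have "(\<Sum>j\<in>C. A i0 j) = (\<Sum>j\<in>C. g j * A i0 (class_rep C))"
    using g i0(1) by (intro sum.cong refl) blast
  then have "(\<Sum>j\<in>C. g j) * A i0 (class_rep C) = (\<Sum>j\<in>C. A i0 j)"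
    by (simp add: sum_distrib_right)
  also have "\<dots> = 0"
    using zero i0(1) unfolding class_sums_zero_def by blast
  finally have "(\<Sum>j\<in>C. g j) = 0"
    using i0(2) by simp
  have "(\<Sum>j\<in>C. b j) = (\<Sum>j\<in>C. g j * b (class_rep C))"
    using g by (intro sum.cong refl) blast
  then have "(\<Sum>j\<in>C. b j) = (\<Sum>j\<in>C. g j) * b (class_rep C)"
    by (simp add: sum_distrib_right)
  with \<open>(\<Sum>j\<in>C. g j) = 0\<close> show ?thesis
    by simp
qed

definition reduced_row_space :: "(nat \<Rightarrow> nat \<Rightarrow> 'a::field) \<Rightarrow> nat \<Rightarrow> nat \<Rightarrow> (nat set \<Rightarrow> 'a) set" where
  "reduced_row_space A m k =
     (\<lambda>c. \<lambda>C\<in>col_classes A m k. \<Sum>i<m. c i * A i (class_rep C)) ` ({..<m} \<rightarrow>\<^sub>E UNIV)"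

lemma reduced_row_space_iff:
  "\<beta> \<in> reduced_row_space A m k \<longleftrightarrow> \<beta> \<in> col_classes A m k \<rightarrow>\<^sub>E UNIV
     \<and> (\<exists>c. \<forall>C\<in>col_classes A m k. \<beta> C = (\<Sum>i<m. c i * A i (class_rep C)))"
proof
  assume "\<beta> \<in> reduced_row_space A m k"
  then obtain c where "\<beta> = (\<lambda>C\<in>col_classes A m k. \<Sum>i<m. c i * A i (class_rep C))"
    unfolding reduced_row_space_def by blast
  then show "\<beta> \<in> col_classes A m k \<rightarrow>\<^sub>E UNIV
      \<and> (\<exists>c. \<forall>C\<in>col_classes A m k. \<beta> C = (\<Sum>i<m. c i * A i (class_rep C)))"
    by (simp add: exI[of _ c])
next
  assume "\<beta> \<in> col_classes A m k \<rightarrow>\<^sub>E UNIV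
      \<and> (\<exists>c. \<forall>C\<in>col_classes A m k. \<beta> C = (\<Sum>i<m. c i * A i (class_rep C)))"
  then obtain c where \<beta>: "\<beta> \<in> col_classes A m k \<rightarrow>\<^sub>E UNIV"
    and c: "\<forall>C\<in>col_classes A m k. \<beta> C = (\<Sum>i<m. c i * A i (class_rep C))"
    by blast
  have "(\<Sum>i<m. restrict c {..<m} i * A i (class_rep C)) = (\<Sum>i<m. c i * A i (class_rep C))" for C
    by (rule sum.cong) simp_all
  with c have "\<beta> = (\<lambda>C\<in>col_classes A m k. \<Sum>i<m. restrict c {..<m} i * A i (class_rep C))"
    by (intro PiE_ext[OF \<beta>]) simp_all
  moreover have "restrict c {..<m} \<in> {..<m} \<rightarrow>\<^sub>E UNIV"
    by simp
  ultimately show "\<beta> \<in> reduced_row_space A m k"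
    unfolding reduced_row_space_def by blast
qed

lemma rows_independent_reduced:
  assumes "non_degenerate A m k"
  shows "rows_independent m (\<lambda>i C. A i (class_rep C)) (col_classes A m k)"
  unfolding rows_independent_def
proof (rule allI, rule impI)
  fix c
  assume c: "\<forall>C\<in>col_classes A m k. (\<Sum>i<m. c i * A i (class_rep C)) = 0"
  have "(\<Sum>i<m. c i * A i j) = 0" if "j < k" for j
  proof -
    define C where "C = col_class A m k j"
    have C: "C \<in> col_classes A m k" "j \<in> C"
      using that by (simp_all add: C_def col_class_in_col_classes mem_col_class)
    then obtain g where "\<forall>i<m. A i j = g * A i (class_rep C)"
      using col_equiv_class_rep unfolding col_equiv_def by blast
    then have "(\<Sum>i<m. c i * A i j) = g * (\<Sum>i<m. c i * A i (class_rep C))"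
      by (simp add: sum_distrib_left mult.left_commute)
    with c C show ?thesis
      by simp
  qed
  with assms show "\<forall>i<m. c i = 0"
    unfolding non_degenerate_def by blast
qed

lemma card_reduced_row_space:
  fixes A :: "nat \<Rightarrow> nat \<Rightarrow> 'a::{field,finite}"
  assumes "non_degenerate A m k"
  shows "card (reduced_row_space A m k) = CARD('a) ^ m"
proof -
  have "inj_on (\<lambda>c. \<lambda>C\<in>col_classes A m k. \<Sum>i<m. c i * A i (class_rep C)) ({..<m} \<rightarrow>\<^sub>E UNIV)"
  proof (rule inj_onI)
    fix c c' :: "nat \<Rightarrow> 'a"
    assume c: "c \<in> {..<m} \<rightarrow>\<^sub>E UNIV" and c': "c' \<in> {..<m} \<rightarrow>\<^sub>E UNIV"
      and eq: "(\<lambda>C\<in>col_classes A m k. \<Sum>i<m. c i * A i (class_rep C))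
        = (\<lambda>C\<in>col_classes A m k. \<Sum>i<m. c' i * A i (class_rep C))"
    have "\<forall>C\<in>col_classes A m k. (\<Sum>i<m. (c i - c' i) * A i (class_rep C)) = 0"
    proof
      fix C
      assume "C \<in> col_classes A m k"
      then have "(\<Sum>i<m. c i * A i (class_rep C)) = (\<Sum>i<m. c' i * A i (class_rep C))"
        using fun_cong[OF eq, of C] by simp
      then show "(\<Sum>i<m. (c i - c' i) * A i (class_rep C)) = 0"
        by (simp add: left_diff_distrib sum_subtractf)
    qed
    with rows_independent_reduced[OF assms] have "\<forall>i<m. c i - c' i = 0"
      unfolding rows_independent_def by (elim allE[where x = "\<lambda>i. c i - c' i"]) simp
    with c c' show "c = c'"
      by (intro PiE_ext) auto
  qed
  then have "card (reduced_row_space A m k) = card ({..<m} \<rightarrow>\<^sub>E (UNIV :: 'a set))"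
    unfolding reduced_row_space_def by (rule card_image)
  then show ?thesis
    by (simp add: card_PiE)
qed

lemma rows_independent_append_reduced:
  assumes nd: "non_degenerate A m k"
    and \<beta>: "\<beta> \<in> col_classes A m k \<rightarrow>\<^sub>E UNIV" "\<beta> \<notin> reduced_row_space A m k"
  shows "rows_independent (Suc m) ((\<lambda>i C. A i (class_rep C))(m := \<beta>)) (col_classes A m k)"
proof (rule rows_independent_Suc)
  have rows_eq: "(\<Sum>i<m. c i * ((\<lambda>i C. A i (class_rep C))(m := \<beta>)) i C)
      = (\<Sum>i<m. c i * A i (class_rep C))" for c C
    by (rule sum.cong) simp_all
  then show "rows_independent m ((\<lambda>i C. A i (class_rep C))(m := \<beta>)) (col_classes A m k)"
    using rows_independent_reduced[OF nd] by (simp add: rows_independent_def)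
  show "\<exists>C\<in>col_classes A m k. ((\<lambda>i C. A i (class_rep C))(m := \<beta>)) m C
      \<noteq> (\<Sum>i<m. c i * ((\<lambda>i C. A i (class_rep C))(m := \<beta>)) i C)" for c
    using \<beta> rows_eq unfolding reduced_row_space_iff by auto
qed

lemma in_row_space_if_reduced:
  assumes pres: "preserves_classes A m k b" and b: "\<forall>j\<ge>k. b j = 0"
    and red: "(\<lambda>C\<in>col_classes A m k. b (class_rep C)) \<in> reduced_row_space A m k"
  shows "b \<in> row_space A m k"
proof -
  obtain c where c: "\<forall>C\<in>col_classes A m k. b (class_rep C) = (\<Sum>i<m. c i * A i (class_rep C))"
    using red unfolding reduced_row_space_iff by auto
  obtain g where g: "\<And>C j. C \<in> col_classes A m k \<Longrightarrow> j \<in> C \<Longrightarrow>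
      (\<forall>i<m. A i j = g j * A i (class_rep C)) \<and> b j = g j * b (class_rep C)"
    using preserves_classes_scaling[OF pres] by blast
  have "b j = (\<Sum>i<m. c i * A i j)" if "j < k" for j
  proof -
    define C where "C = col_class A m k j"
    have C: "C \<in> col_classes A m k" "j \<in> C"
      using that by (simp_all add: C_def col_class_in_col_classes mem_col_class)
    have "b j = g j * (\<Sum>i<m. c i * A i (class_rep C))"
      using g[OF C] c C(1) by simp
    also have "\<dots> = (\<Sum>i<m. c i * A i j)"
      using g[OF C] by (simp add: sum_distrib_left mult.left_commute)
    finally show ?thesis .
  qed
  with b show ?thesis
    unfolding row_space_def by blast
qed

section \<open>Classes not summing to zero\<close>

lemma reduced_row_space_eq_hyperplane:
  fixes A :: "nat \<Rightarrow> nat \<Rightarrow> 'a::{field,finite}"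
  assumes nd: "non_degenerate A m k" and l: "card (col_classes A m k) = m + 1"
    and C0: "C0 \<in> col_classes A m k" "\<tau> C0 \<noteq> 0"
    and orth: "\<And>i. i < m \<Longrightarrow> (\<Sum>C\<in>col_classes A m k. \<tau> C * A i (class_rep C)) = 0"
  shows "reduced_row_space A m k = hom_solutions 1 (\<lambda>_. \<tau>) (col_classes A m k)"
proof -
  define CL where "CL = col_classes A m k"
  have fin: "finite CL"
    by (simp add: CL_def finite_col_classes)
  have indep: "rows_independent 1 (\<lambda>_. \<tau>) CL"
    unfolding rows_independent_def
  proof (rule allI, rule impI)
    fix c :: "nat \<Rightarrow> 'a"
    assume "\<forall>C\<in>CL. (\<Sum>i<1. c i * \<tau> C) = 0"
    then have "(\<Sum>i<1. c i * \<tau> C0) = 0"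
      using C0(1) unfolding CL_def by blast
    with C0(2) show "\<forall>i<1. c i = 0"
      by simp
  qed
  have "reduced_row_space A m k \<subseteq> hom_solutions 1 (\<lambda>_. \<tau>) CL"
  proof
    fix \<beta>
    assume "\<beta> \<in> reduced_row_space A m k"
    then obtain c where \<beta>: "\<beta> \<in> CL \<rightarrow>\<^sub>E UNIV"
      and c: "\<forall>C\<in>CL. \<beta> C = (\<Sum>i<m. c i * A i (class_rep C))"
      unfolding reduced_row_space_iff CL_def by blast
    have "(\<Sum>C\<in>CL. \<tau> C * \<beta> C) = (\<Sum>i<m. c i * (\<Sum>C\<in>CL. \<tau> C * A i (class_rep C)))"
      using c by (simp add: sum_distrib_left mult.left_commute sum.swap[of _ CL])
    with orth \<beta> show "\<beta> \<in> hom_solutions 1 (\<lambda>_. \<tau>) CL"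
      by (simp add: hom_solutions_def CL_def)
  qed
  moreover have "card (hom_solutions 1 (\<lambda>_. \<tau>) CL) \<le> card (reduced_row_space A m k)"
    using card_hom_solutions[OF fin indep] l card_reduced_row_space[OF nd]
    by (simp add: CL_def)
  ultimately show ?thesis
    using card_seteq finite_hom_solutions[OF fin] unfolding CL_def by blast
qed

lemma balanced_preserving_in_row_space:
  fixes A :: "nat \<Rightarrow> nat \<Rightarrow> 'a::{field,finite}"
  assumes rows: "\<forall>i<m. (\<Sum>j<k. A i j) = 0" and nd: "non_degenerate A m k"
    and l: "card (col_classes A m k) = m + 1"
    and C0: "C0 \<in> col_classes A m k" "\<not> class_sums_zero A m C0"
    and pres: "preserves_classes A m k b" and b: "\<forall>j\<ge>k. b j = 0" and bal: "(\<Sum>j<k. b j) = 0"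
  shows "b \<in> row_space A m k"
proof -
  obtain g where g: "\<And>C j. C \<in> col_classes A m k \<Longrightarrow> j \<in> C \<Longrightarrow>
      (\<forall>i<m. A i j = g j * A i (class_rep C)) \<and> b j = g j * b (class_rep C)"
    using preserves_classes_scaling[OF pres] by blast
  define \<tau> where "\<tau> C = (\<Sum>j\<in>C. g j)" for C
  have "\<tau> C0 \<noteq> 0"
  proof
    assume "\<tau> C0 = 0"
    have "(\<Sum>j\<in>C0. A i j) = \<tau> C0 * A i (class_rep C0)" if "i < m" for i
      unfolding \<tau>_def sum_distrib_right using g C0(1) that by (intro sum.cong refl) simp
    with \<open>\<tau> C0 = 0\<close> C0(2) show False
      unfolding class_sums_zero_def by simp
  qed
  moreover have "(\<Sum>C\<in>col_classes A m k. \<tau> C * A i (class_rep C)) = 0" if "i < m" for i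
    using rows that sum_over_col_classes_scaled[of A m k "A i" g] g unfolding \<tau>_def by simp
  ultimately have "reduced_row_space A m k = hom_solutions 1 (\<lambda>_. \<tau>) (col_classes A m k)"
    using reduced_row_space_eq_hyperplane[OF nd l C0(1)] by blast
  moreover have "(\<Sum>C\<in>col_classes A m k. \<tau> C * b (class_rep C)) = 0"
    using bal sum_over_col_classes_scaled[of A m k b g] g unfolding \<tau>_def by simp
  ultimately show ?thesis
    using in_row_space_if_reduced[OF pres b] by (simp add: hom_solutions_def)
qed

lemma exists_generic_constant_solution:
  fixes A :: "nat \<Rightarrow> nat \<Rightarrow> 'a::{field,finite}" and s :: "'n \<Rightarrow> 'a"
  assumes rows: "\<forall>i<m. (\<Sum>j<k. A i j) = 0" and nd: "non_degenerate A m k"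
    and l: "card (col_classes A m k) = m + 1"
    and C0: "C0 \<in> col_classes A m k" "\<not> class_sums_zero A m C0"
    and s: "s \<in> S"
  shows "\<exists>x :: nat \<Rightarrow> 'n \<Rightarrow> 'a. (\<forall>j<k. x j \<in> S) \<and> is_solution A m k x
           \<and> (\<forall>b\<in>Ann_bal k x. preserves_classes A m k b \<longrightarrow> b \<in> row_space A m k)"
proof (intro exI conjI)
  show "\<forall>j<k. (\<lambda>_. s) j \<in> S"
    using s by simp
  show "is_solution A m k (\<lambda>_. s)"
    using rows by (simp add: is_solution_def flip: sum_distrib_right)
  show "\<forall>b\<in>Ann_bal k (\<lambda>_. s). preserves_classes A m k b \<longrightarrow> b \<in> row_space A m k"
    using balanced_preserving_in_row_space[OF rows nd l C0] by (auto simp: Ann_bal_def)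
qed

section \<open>Classes summing to zero\<close>

definition interlace ::
    "(nat \<Rightarrow> nat \<Rightarrow> 'a::field) \<Rightarrow> nat \<Rightarrow> nat \<Rightarrow> (nat set \<Rightarrow> 'v) \<Rightarrow> (nat set \<Rightarrow> 'v) \<Rightarrow> nat \<Rightarrow> 'v" where
  "interlace A m k s s' j =
     (if j = class_rep (col_class A m k j) then s (col_class A m k j) else s' (col_class A m k j))"

lemma interlace_mem:
  assumes "s \<in> col_classes A m k \<rightarrow>\<^sub>E S" "s' \<in> col_classes A m k \<rightarrow>\<^sub>E S" "j < k"
  shows "interlace A m k s s' j \<in> S"
  using assms col_class_in_col_classes[OF assms(3)] by (auto simp: interlace_def)

lemma sum_interlace:
  fixes s s' :: "nat set \<Rightarrow> 'n \<Rightarrow> 'a::field"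
  assumes zero: "\<forall>C\<in>col_classes A m k. (\<Sum>j\<in>C. w j) = 0"
  shows "(\<Sum>j<k. w j * interlace A m k s s' j t)
    = (\<Sum>C\<in>col_classes A m k. w (class_rep C) * (s C t - s' C t))"
  unfolding sum_over_col_classes[of _ k A m]
proof (rule sum.cong[OF refl])
  fix C
  assume C: "C \<in> col_classes A m k"
  have "(\<Sum>j\<in>C. w j * interlace A m k s s' j t)
      = (\<Sum>j\<in>C. w j * s' C t + (if j = class_rep C then w j * (s C t - s' C t) else 0))"
  proof (rule sum.cong[OF refl])
    fix j
    assume "j \<in> C"
    then have j: "col_class A m k j = C"
      using col_classes_eq_col_class[OF C] by simp
    show "w j * interlace A m k s s' j t
        = w j * s' C t + (if j = class_rep C then w j * (s C t - s' C t) else 0)"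
      unfolding interlace_def j by (simp add: right_diff_distrib)
  qed
  also have "\<dots> = (\<Sum>j\<in>C. w j) * s' C t + w (class_rep C) * (s C t - s' C t)"
    using class_rep_in[OF C] finite_col_class[OF C] by (simp add: sum.distrib sum_distrib_right)
  finally show "(\<Sum>j\<in>C. w j * interlace A m k s s' j t) = w (class_rep C) * (s C t - s' C t)"
    using zero C by simp
qed

lemma card_nonreduced_vectors_less:
  fixes A :: "nat \<Rightarrow> nat \<Rightarrow> 'a::{field,finite}"
  shows "card ((col_classes A m k \<rightarrow>\<^sub>E UNIV) - reduced_row_space A m k) < CARD('a) ^ card (col_classes A m k)"
proof -
  let ?V = "col_classes A m k \<rightarrow>\<^sub>E (UNIV :: 'a set)"
  have fin: "finite ?V"
    by (simp add: finite_col_classes finite_PiE)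
  have zero: "(\<lambda>C\<in>col_classes A m k. 0) \<in> reduced_row_space A m k"
    unfolding reduced_row_space_iff by (auto intro: exI[of _ "\<lambda>_. 0"])
  then have "card (?V - reduced_row_space A m k) \<le> card (?V - {\<lambda>C\<in>col_classes A m k. 0})"
    using fin by (intro card_mono) auto
  also have "\<dots> < card ?V"
    using fin by (rule card_Diff1_less) simp
  also have "card ?V = CARD('a) ^ card (col_classes A m k)"
    by (simp add: card_PiE finite_col_classes)
  finally show ?thesis .
qed

lemma card_solution_pairs_of_extensions:
  fixes A :: "nat \<Rightarrow> nat \<Rightarrow> 'a::{field,finite}" and S :: "('n::finite \<Rightarrow> 'a) set"
  assumes nd: "non_degenerate A m k"
  defines "B \<equiv> (col_classes A m k \<rightarrow>\<^sub>E UNIV) - reduced_row_space A m k"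
  shows "card (\<Union>\<beta>\<in>B. solution_pairs (col_classes A m k) S ((\<lambda>i C. A i (class_rep C))(m := \<beta>)) (Suc m))
      * CARD('a) ^ (Suc m * CARD('n))
    \<le> card B * (card (col_classes A m k \<rightarrow>\<^sub>E S) * CARD('a) ^ (card (col_classes A m k) * CARD('n)))"
proof -
  define bad where "bad \<beta> = solution_pairs (col_classes A m k) S ((\<lambda>i C. A i (class_rep C))(m := \<beta>)) (Suc m)"
    for \<beta>
  have fin: "finite (col_classes A m k)"
    by (rule finite_col_classes)
  have "card (\<Union>\<beta>\<in>B. bad \<beta>) \<le> (\<Sum>\<beta>\<in>B. card (bad \<beta>))"
    using fin by (intro card_UN_le) (simp add: B_def finite_PiE)
  then have "card (\<Union>\<beta>\<in>B. bad \<beta>) * CARD('a) ^ (Suc m * CARD('n))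
      \<le> (\<Sum>\<beta>\<in>B. card (bad \<beta>) * CARD('a) ^ (Suc m * CARD('n)))"
    unfolding sum_distrib_right[symmetric] by (rule mult_le_mono1)
  also have "\<dots> \<le> (\<Sum>\<beta>\<in>B. card (col_classes A m k \<rightarrow>\<^sub>E S) * CARD('a) ^ (card (col_classes A m k) * CARD('n)))"
  proof (rule sum_mono)
    fix \<beta>
    assume "\<beta> \<in> B"
    then have "rows_independent (Suc m) ((\<lambda>i C. A i (class_rep C))(m := \<beta>)) (col_classes A m k)"
      unfolding B_def by (intro rows_independent_append_reduced[OF nd]) simp_all
    then show "card (bad \<beta>) * CARD('a) ^ (Suc m * CARD('n))
        \<le> card (col_classes A m k \<rightarrow>\<^sub>E S) * CARD('a) ^ (card (col_classes A m k) * CARD('n))"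
      unfolding bad_def by (rule card_solution_pairs_upper[OF fin])
  qed
  finally show ?thesis
    by (simp add: bad_def)
qed

lemma exists_solution_pair_avoiding_extensions:
  fixes A :: "nat \<Rightarrow> nat \<Rightarrow> 'a::{field,finite}" and S :: "('n::finite \<Rightarrow> 'a) set"
  assumes nd: "non_degenerate A m k"
    and big: "CARD('a) ^ (card (col_classes A m k) + card (col_classes A m k) * CARD('n))
      \<le> card S ^ card (col_classes A m k) * CARD('a) ^ CARD('n)"
  obtains p where "p \<in> solution_pairs (col_classes A m k) S (\<lambda>i C. A i (class_rep C)) m"
    and "\<And>\<beta>. \<beta> \<in> col_classes A m k \<rightarrow>\<^sub>E UNIV \<Longrightarrow> \<beta> \<notin> reduced_row_space A m k \<Longrightarrow>
      p \<notin> solution_pairs (col_classes A m k) S ((\<lambda>i C. A i (class_rep C))(m := \<beta>)) (Suc m)"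
proof -
  define CL where "CL = col_classes A m k"
  define l where "l = card CL"
  define q where "q = CARD('a)"
  define n where "n = CARD('n)"
  define \<rho> where "\<rho> = (\<lambda>i C. A i (class_rep C))"
  define B where "B = (CL \<rightarrow>\<^sub>E UNIV) - reduced_row_space A m k"
  define bad where "bad \<beta> = solution_pairs CL S (\<rho>(m := \<beta>)) (Suc m)" for \<beta>
  have fin: "finite CL"
    by (simp add: CL_def finite_col_classes)
  have "card B \<le> q ^ l - 1"
    using card_nonreduced_vectors_less[of A m k] by (simp add: B_def CL_def q_def l_def)
  then have "card (\<Union>\<beta>\<in>B. bad \<beta>) * q ^ (Suc m * n) \<le> (q ^ l - 1) * (card (CL \<rightarrow>\<^sub>E S) * q ^ (l * n))"
    using card_solution_pairs_of_extensions[OF nd, of S] le_trans mult_le_mono1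
    unfolding B_def bad_def CL_def \<rho>_def q_def n_def l_def by blast
  also have "\<dots> < card (solution_pairs CL S \<rho> m) * q ^ (Suc m * n)"
  proof (rule collision_count_gap)
    show "1 \<le> q"
      by (simp add: q_def Suc_le_eq)
    show "q ^ (l + l * n) \<le> card (CL \<rightarrow>\<^sub>E S) * q ^ n"
      using big fin by (simp add: card_PiE CL_def l_def q_def n_def)
    show "card (CL \<rightarrow>\<^sub>E S) ^ 2 \<le> q ^ (m * n) * card (solution_pairs CL S \<rho> m)"
      unfolding q_def n_def using fin by (rule card_solution_pairs_lower)
  qed
  finally have less: "card (\<Union>\<beta>\<in>B. bad \<beta>) < card (solution_pairs CL S \<rho> m)"
    by (rule mult_less_cancel2[THEN iffD1, THEN conjunct2])
  have "finite (\<Union>\<beta>\<in>B. bad \<beta>)"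
  proof (rule finite_subset)
    show "(\<Union>\<beta>\<in>B. bad \<beta>) \<subseteq> (CL \<rightarrow>\<^sub>E S) \<times> (CL \<rightarrow>\<^sub>E S)"
      by (auto simp: bad_def solution_pairs_def)
    show "finite ((CL \<rightarrow>\<^sub>E S) \<times> (CL \<rightarrow>\<^sub>E S))"
      using fin by (simp add: finite_PiE)
  qed
  with less have "\<not> solution_pairs CL S \<rho> m \<subseteq> (\<Union>\<beta>\<in>B. bad \<beta>)"
    by (meson card_mono not_le)
  then obtain p where p: "p \<in> solution_pairs CL S \<rho> m" "p \<notin> (\<Union>\<beta>\<in>B. bad \<beta>)"
    by blast
  show ?thesis
  proof (rule that)
    show "p \<in> solution_pairs (col_classes A m k) S (\<lambda>i C. A i (class_rep C)) m"
      using p(1) by (simp add: CL_def \<rho>_def)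
    show "p \<notin> solution_pairs (col_classes A m k) S ((\<lambda>i C. A i (class_rep C))(m := \<beta>)) (Suc m)"
      if "\<beta> \<in> col_classes A m k \<rightarrow>\<^sub>E UNIV" "\<beta> \<notin> reduced_row_space A m k" for \<beta>
      using p(2) that by (auto simp: B_def bad_def CL_def \<rho>_def)
  qed
qed

lemma interlace_is_solution:
  fixes A :: "nat \<Rightarrow> nat \<Rightarrow> 'a::field"
  assumes zero: "\<forall>C\<in>col_classes A m k. class_sums_zero A m C"
    and p: "p \<in> solution_pairs (col_classes A m k) S (\<lambda>i C. A i (class_rep C)) m"
  shows "is_solution A m k (interlace A m k (fst p) (snd p))"
  unfolding is_solution_def
proof (intro allI impI ext)
  fix i t
  assume "i < m"
  then have "\<forall>C\<in>col_classes A m k. (\<Sum>j\<in>C. A i j) = 0"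
    using zero unfolding class_sums_zero_def by blast
  then have "(\<Sum>j<k. A i j * interlace A m k (fst p) (snd p) j t)
      = (\<Sum>C\<in>col_classes A m k. A i (class_rep C) * (fst p C t - snd p C t))"
    by (rule sum_interlace)
  also have "\<dots> = 0"
    using p \<open>i < m\<close> by (simp add: solution_pairs_def hom_solutions_def)
  finally show "(\<Sum>j<k. A i j * interlace A m k (fst p) (snd p) j t) = 0" .
qed

lemma solution_pair_of_annihilator_extension:
  fixes A :: "nat \<Rightarrow> nat \<Rightarrow> 'a::field"
  assumes nd: "non_degenerate A m k"
    and zero: "\<forall>C\<in>col_classes A m k. class_sums_zero A m C"
    and p: "p \<in> solution_pairs (col_classes A m k) S (\<lambda>i C. A i (class_rep C)) m"
    and b: "b \<in> Ann_bal k (interlace A m k (fst p) (snd p))" and pres: "preserves_classes A m k b"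
  shows "p \<in> solution_pairs (col_classes A m k) S
    ((\<lambda>i C. A i (class_rep C))(m := (\<lambda>C\<in>col_classes A m k. b (class_rep C)))) (Suc m)"
proof -
  have "\<forall>C\<in>col_classes A m k. (\<Sum>j\<in>C. b j) = 0"
    using class_sum_zero_if_preserves[OF nd pres] zero by blast
  then have "(\<Sum>C\<in>col_classes A m k. b (class_rep C) * (fst p C t - snd p C t))
      = (\<Sum>j<k. b j * interlace A m k (fst p) (snd p) j t)" for t
    by (simp add: sum_interlace)
  also have "\<dots> t = 0" for t
    using b by (auto simp: Ann_bal_def dest: fun_cong[of _ _ t])
  finally show ?thesis
    using p by (simp add: solution_pairs_def hom_solutions_Suc_fun_upd)
qed

lemma exists_generic_solution_if_classes_sum_zero:
  fixes A :: "nat \<Rightarrow> nat \<Rightarrow> 'a::{field,finite}" and S :: "('n::finite \<Rightarrow> 'a) set"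
  assumes nd: "non_degenerate A m k"
    and zero: "\<forall>C\<in>col_classes A m k. class_sums_zero A m C"
    and big: "CARD('a) ^ (card (col_classes A m k) + card (col_classes A m k) * CARD('n))
      \<le> card S ^ card (col_classes A m k) * CARD('a) ^ CARD('n)"
  shows "\<exists>x :: nat \<Rightarrow> 'n \<Rightarrow> 'a. (\<forall>j<k. x j \<in> S) \<and> is_solution A m k x
           \<and> (\<forall>b\<in>Ann_bal k x. preserves_classes A m k b \<longrightarrow> b \<in> row_space A m k)"
proof -
  obtain p where p: "p \<in> solution_pairs (col_classes A m k) S (\<lambda>i C. A i (class_rep C)) m"
    and generic: "\<And>\<beta>. \<beta> \<in> col_classes A m k \<rightarrow>\<^sub>E UNIV \<Longrightarrow> \<beta> \<notin> reduced_row_space A m k \<Longrightarrow>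
      p \<notin> solution_pairs (col_classes A m k) S ((\<lambda>i C. A i (class_rep C))(m := \<beta>)) (Suc m)"
    using exists_solution_pair_avoiding_extensions[OF nd big] by blast
  define x where "x = interlace A m k (fst p) (snd p)"
  have "fst p \<in> col_classes A m k \<rightarrow>\<^sub>E S" "snd p \<in> col_classes A m k \<rightarrow>\<^sub>E S"
    using p by (simp_all add: solution_pairs_def mem_Times_iff)
  then have "\<forall>j<k. x j \<in> S"
    unfolding x_def by (blast intro: interlace_mem)
  moreover have "is_solution A m k x"
    unfolding x_def using zero p by (rule interlace_is_solution)
  moreover have "b \<in> row_space A m k" if b: "b \<in> Ann_bal k x" and pres: "preserves_classes A m k b" for b
  proof (rule in_row_space_if_reduced[OF pres])
    show "\<forall>j\<ge>k. b j = 0"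
      using b by (simp add: Ann_bal_def)
    show "(\<lambda>C\<in>col_classes A m k. b (class_rep C)) \<in> reduced_row_space A m k"
    proof (rule ccontr)
      assume not_reduced: "(\<lambda>C\<in>col_classes A m k. b (class_rep C)) \<notin> reduced_row_space A m k"
      have "p \<notin> solution_pairs (col_classes A m k) S
          ((\<lambda>i C. A i (class_rep C))(m := (\<lambda>C\<in>col_classes A m k. b (class_rep C)))) (Suc m)"
        by (rule generic[OF _ not_reduced]) simp
      with solution_pair_of_annihilator_extension[OF nd zero p b[unfolded x_def] pres] show False
        by contradiction
    qed
  qed
  ultimately show ?thesis
    by blast
qed
lemma power_bound_of_powr_bound:
  fixes q n l s :: nat
  assumes q: "q \<ge> 1"
    and s: "real s \<ge> real q powr (1 + (real l - 1) / real l * real n)"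
  shows "q ^ (l + l * n) \<le> s ^ l * q ^ n"
proof (cases "l = 0")
  case True
  then show ?thesis
    using q by simp
next
  case False
  define e where "e = 1 + (real l - 1) / real l * real n"
  have le: "real l * e = real (l + (l - 1) * n)"
    using False by (simp add: e_def field_simps of_nat_diff)
  have "real (q ^ (l + (l - 1) * n)) = real q powr real (l + (l - 1) * n)"
    using q by (subst powr_realpow) simp_all
  also have "\<dots> = real q powr (real l * e)"
    by (simp only: le)
  also have "\<dots> = (real q powr e) ^ l"
    using q by (simp add: powr_power)
  also have "\<dots> \<le> real s ^ l"
    using s by (intro power_mono) (simp_all add: e_def)
  finally have "q ^ (l + (l - 1) * n) \<le> s ^ l"
    by (simp only: of_nat_le_iff flip: of_nat_power)
  moreover have "l + l * n = (l + (l - 1) * n) + n"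
    using False by (cases l) simp_all
  ultimately show ?thesis
    by (simp add: power_add)
qed

theorem lemma6p5:
  fixes A :: "nat \<Rightarrow> nat \<Rightarrow> 'a::{field,finite}"
    and m k :: nat
    and S :: "('n::finite \<Rightarrow> 'a) set"
  assumes "type_RC A m k"
    and "non_degenerate A m k"
    and "irreducible_sys A m k"
    and "real (card S) \<ge> real (CARD('a)) powr
           (1 + (real (card (col_classes A m k)) - 1) / real (card (col_classes A m k))
                 * real (CARD('n)))"
    and "card (col_classes A m k) = m + 1 \<or> (\<forall>C\<in>col_classes A m k. class_sums_zero A m C)"
  shows "\<exists>x :: nat \<Rightarrow> 'n \<Rightarrow> 'a. (\<forall>j<k. x j \<in> S) \<and> is_solution A m k x
           \<and> (\<forall>b\<in>Ann_bal k x. preserves_classes A m k b \<longrightarrow> b \<in> row_space A m k)"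
proof -
  have big: "CARD('a) ^ (card (col_classes A m k) + card (col_classes A m k) * CARD('n))
      \<le> card S ^ card (col_classes A m k) * CARD('a) ^ CARD('n)"
    using assms(4) by (intro power_bound_of_powr_bound) (simp_all add: Suc_le_eq)
  show ?thesis
  proof (cases "\<forall>C\<in>col_classes A m k. class_sums_zero A m C")
    case True
    from assms(2) True big show ?thesis
      by (rule exists_generic_solution_if_classes_sum_zero)
  next
    case False
    then obtain C0 where C0: "C0 \<in> col_classes A m k" "\<not> class_sums_zero A m C0"
      by blast
    with assms(5) have l: "card (col_classes A m k) = m + 1"
      by blast
    have "S \<noteq> {}"
      using big l by (auto simp: Suc_le_eq)
    then obtain s where "s \<in> S"
      by blast
    moreover have "\<forall>i<m. (\<Sum>j<k. A i j) = 0"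
      using assms(1) by (simp add: type_RC_def)
    ultimately show ?thesis
      using exists_generic_constant_solution[OF _ assms(2) l C0] by blast
  qed
qed

end
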